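(* Suppose $\Pi$ satisfies the Pollack condition $\alpha_n+\alpha_{n+1}=0$. Put $\alpha=\alpha_{n+1}\alpha_{n+2}\cdots\alpha_{2n}$ and $\beta=\alpha_n\alpha_{n+2}\cdots\alpha_{2n}$. Then $v_p(\alpha)=v_p(\beta)$, and $$r:=v_p(\alpha)-\sum_{i=n+1}^{2n}h_i\;\ge\;\frac{\#\mathrm{Crit}(\Pi)}{2},$$ with equality when $v_p(\alpha_{n+2}\cdots\alpha_{2n})=h_{n+2}+\cdots+h_{2n}$.
   Context: Let $p$ be an odd prime and $n\ge 1$. Fix an isomorphism $\overline{\mathbb{Q}}_p\cong\mathbb{C}$; $v_p$ denotes the $p$-adic valuation on $\mathbb{C}_p$ normalised by $v_p(p)=1$. Let $\Pi$ be a cuspidal automorphic representation of $\mathrm{GL}_{2n}(\mathbb{A}_{\mathbb{Q}})$ which is cohomological with respect to an integral weight $\mu=(\mu_1,\dots,\mu_{2n})\in\mathbb{Z}^{2n}$, which is the transfer of a globally generic cuspidal automorphic representation of $\mathrm{GSpin}_{2n+1}(\mathbb{A}_{\mathbb{Q}})$, and which is unramified at $p$. Then $\mu$ is dominant ($\mu_1\ge\cdots\ge\mu_{2n}$) and pure: there is an integer $w$ (the purity weight) with $\mu_i+\mu_{2n+1-i}=w$ for all $i$. The Hodge–Tate weights are $h_i=\mu_i+2n-i$ ($1\le i\le 2n$). Set $\mathrm{Crit}(\Pi)=\{j\in\mathbb{Z}:\mu_n\ge j\ge\mu_{n+1}\}$, so $\#\mathrm{Crit}(\Pi)=h_n-h_{n+1}$.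 Write $\Pi_p\cong\mathrm{Ind}_{B(\mathbb{Q}_p)}^{\mathrm{GL}_{2n}(\mathbb{Q}_p)}(|\cdot|^{(2n-1)/2}\lambda_p)$ (normalised parabolic induction from the upper triangular Borel $B$) for an unramified character $\lambda_p$ of the diagonal torus; the Satake parameters are $\alpha_i=\lambda_{p,i}(p)$, where $\lambda_{p,i}$ is the $i$-th diagonal component. They are indexed so that $v_p(\alpha_1)\ge\cdots\ge v_p(\alpha_{2n})$ and $\alpha_i\alpha_{2n+1-i}=\lambda$ for all $i$, for a fixed $\lambda$ with $v_p(\lambda)=2n-1+w$ (possible by the transfer from $\mathrm{GSpin}_{2n+1}$). Known fact (Hida), used freely: the Newton polygon (the piecewise linear curve through $(0,0)$ and $(j,\sum_{i=1}^{j}v_p(\alpha_{2n+1-i}))$, $j=1,\dots,2n$) lies on or above the Hodge polygon (through $(0,0)$ and $(j,\sum_{i=1}^{j}h_{2n+1-i})$, $j=1,\dots,2n$), and their endpoints coincide. *)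

theory Defs
  imports Complex_Main "HOL-Computational_Algebra.Primes"
begin

text \<open>A (rank-one, real-valued) valuation on the nonzero elements of a field,
  modelling the p-adic valuation v_p on C_p restricted to nonzero elements.\<close>
definition is_valuation :: "('a::field \<Rightarrow> real) \<Rightarrow> bool" where
  "is_valuation v \<longleftrightarrow>
     (\<forall>x y. x \<noteq> 0 \<and> y \<noteq> 0 \<longrightarrow> v (x * y) = v x + v y) \<and>
     (\<forall>x y. x \<noteq> 0 \<and> y \<noteq> 0 \<and> x + y \<noteq> 0 \<longrightarrow> min (v x) (v y) \<le> v (x + y))"

definition hodge_weight :: "(nat \<Rightarrow> int) \<Rightarrow> nat \<Rightarrow> nat \<Rightarrow> int" where
  "hodge_weight \<mu> n i = \<mu> i + int (2 * n) - int i"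

definition crit_set :: "(nat \<Rightarrow> int) \<Rightarrow> nat \<Rightarrow> int set" where
  "crit_set \<mu> n = {j. \<mu> (n + 1) \<le> j \<and> j \<le> \<mu> n}"

text \<open>The piecewise linear curve through (0,0) and (j, s 1 + ... + s j),
  evaluated at a real x >= 0 (linear interpolation between integer points).\<close>
definition polygon :: "(nat \<Rightarrow> real) \<Rightarrow> real \<Rightarrow> real" where
  "polygon s x = (\<Sum>i = 1..nat \<lfloor>x\<rfloor>. s i) + (x - of_int \<lfloor>x\<rfloor>) * s (nat \<lfloor>x\<rfloor> + 1)"

end

theory Submission
  imports Defs
begin

text \<open>The Pollack condition \<open>\<alpha>\<^sub>n = -\<alpha>\<^sub>n\<^sub>+\<^sub>1\<close> together with \<open>\<alpha>\<^sub>n\<alpha>\<^sub>n\<^sub>+\<^sub>1 = \<lambda>\<close> forces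
  \<open>v(\<alpha>\<^sub>n) = v(\<alpha>\<^sub>n\<^sub>+\<^sub>1) = v(\<lambda>)/2 = (2n - 1 + w)/2\<close>; this gives \<open>v(\<alpha>) = v(\<beta>)\<close>.
  By purity \<open>w = \<mu>\<^sub>n + \<mu>\<^sub>n\<^sub>+\<^sub>1\<close>, so \<open>v(\<alpha>\<^sub>n\<^sub>+\<^sub>1) - h\<^sub>n\<^sub>+\<^sub>1 = (\<mu>\<^sub>n - \<mu>\<^sub>n\<^sub>+\<^sub>1 + 1)/2 = #Crit/2\<close>.
  The remaining factors contribute \<open>v(\<alpha>\<^sub>n\<^sub>+\<^sub>2\<cdots>\<alpha>\<^sub>2\<^sub>n) - (h\<^sub>n\<^sub>+\<^sub>2 + \<dots> + h\<^sub>2\<^sub>n) \<ge> 0\<close>,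
  which is the Newton-above-Hodge inequality at the vertex \<open>n - 1\<close>.\<close>

lemma valuation_mult:
  assumes "is_valuation v" "x \<noteq> 0" "y \<noteq> 0"
  shows "v (x * y) = v x + v y"
  using assms unfolding is_valuation_def by blast

lemma valuation_one:
  assumes "is_valuation v"
  shows "v (1::'a::field) = 0"
  using valuation_mult[OF assms, of 1 1] by simp

lemma valuation_prod:
  assumes "is_valuation v" "finite A" "\<And>i. i \<in> A \<Longrightarrow> f i \<noteq> (0::'a::field)"
  shows "v (prod f A) = (\<Sum>i\<in>A. v (f i))"
  using assms(2,3)
proof (induction A rule: finite_induct)
  case empty
  then show ?case using valuation_one[OF assms(1)] by simp
next
  case (insert x F)
  then have "prod f F \<noteq> 0" by auto
  with insert show ?case by (simp add: valuation_mult[OF assms(1)])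
qed

lemma valuation_minus:
  assumes "is_valuation v" "x \<noteq> 0"
  shows "v (- (x::'a::field)) = v x"
proof -
  have "v ((-1) * (-1::'a)) = v (-1) + v (-1)"
    by (rule valuation_mult[OF assms(1)]) simp_all
  then have "v (-1::'a) = 0" using valuation_one[OF assms(1)] by simp
  moreover have "v ((-1) * x) = v (-1) + v x"
    by (rule valuation_mult[OF assms(1)]) (simp_all add: assms(2))
  ultimately show ?thesis by simp
qed

lemma valuation_eq_half_of_square_neg:
  assumes "is_valuation v" "x \<noteq> 0" "y = - x" "x * y = c"
  shows "v x = v c / 2"
proof -
  have "v c = v x + v y"
    using assms(2-4) valuation_mult[OF assms(1), of x y] by simp
  with assms show ?thesis by (simp add: valuation_minus)
qed

lemma polygon_of_nat: "polygon s (real k) = (\<Sum>i = 1..k. s i)"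
  unfolding polygon_def by simp

lemma polygon_reflected_of_nat:
  assumes "k \<le> m"
  shows "polygon (\<lambda>i. f (m + 1 - i)) (real k) = (\<Sum>j = m + 1 - k..m. f j)"
  unfolding polygon_of_nat
  by (rule sum.reindex_bij_witness[of _ "\<lambda>j. m + 1 - j" "\<lambda>i. m + 1 - i"]) (use assms in auto)

lemma sum_reflected_le_of_polygon_le:
  assumes "polygon (\<lambda>i. f (m + 1 - i)) (real k) \<le> polygon (\<lambda>i. g (m + 1 - i)) (real k)"
    and "k \<le> m"
  shows "(\<Sum>j = m + 1 - k..m. f j) \<le> (\<Sum>j = m + 1 - k..m. g j)"
  using assms(1) polygon_reflected_of_nat[OF assms(2), of f] polygon_reflected_of_nat[OF assms(2), of g]
  by linarith

lemma card_crit_set: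
  assumes "\<mu> (n + 1) \<le> \<mu> n"
  shows "int (card (crit_set \<mu> n)) = \<mu> n - \<mu> (n + 1) + 1"
proof -
  have "crit_set \<mu> n = {\<mu> (n + 1)..\<mu> n}" unfolding crit_set_def by auto
  with assms show ?thesis by simp
qed

lemma half_weight_minus_hodge_weight_eq_half_card_crit_set:
  assumes "\<mu> (n + 1) \<le> \<mu> n" "w = \<mu> n + \<mu> (n + 1)"
  shows "(real (2 * n) - 1 + real_of_int w) / 2 - hodge_weight \<mu> n (n + 1) = real (card (crit_set \<mu> n)) / 2"
proof -
  have "real (card (crit_set \<mu> n)) = \<mu> n - \<mu> (n + 1) + 1"
    using card_crit_set[OF assms(1)] by (metis of_int_of_nat_eq of_int_add of_int_diff of_int_1)
  with assms(2) show ?thesis unfolding hodge_weight_def by (simp add: field_simps)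
qed

theorem mainTheorem3:
  fixes p n :: nat
    and v :: "'a::field_char_0 \<Rightarrow> real"
    and \<alpha> :: "nat \<Rightarrow> 'a"
    and lam :: 'a
    and \<mu> :: "nat \<Rightarrow> int"
    and w :: int
  assumes p_prime: "prime p" and p_odd: "odd p"
    and n_pos: "n \<ge> 1"
    and val: "is_valuation v" and val_p: "v (of_nat p) = 1"
    and dominant: "\<forall>i j. 1 \<le> i \<longrightarrow> i \<le> j \<longrightarrow> j \<le> 2 * n \<longrightarrow> \<mu> j \<le> \<mu> i"
    and pure: "\<forall>i \<in> {1..2 * n}. \<mu> i + \<mu> (2 * n + 1 - i) = w"
    and nonzero: "\<forall>i \<in> {1..2 * n}. \<alpha> i \<noteq> 0"
    and ordered: "\<forall>i j. 1 \<le> i \<longrightarrow> i \<le> j \<longrightarrow> j \<le> 2 * n \<longrightarrow> v (\<alpha> j) \<le> v (\<alpha> i)"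
    and pairing: "\<forall>i \<in> {1..2 * n}. \<alpha> i * \<alpha> (2 * n + 1 - i) = lam"
    and val_lam: "v lam = real (2 * n) - 1 + real_of_int w"
    and newton_above_hodge: "\<forall>x \<in> {0..real (2 * n)}.
        polygon (\<lambda>i. real_of_int (hodge_weight \<mu> n (2 * n + 1 - i))) x
          \<le> polygon (\<lambda>i. v (\<alpha> (2 * n + 1 - i))) x"
    and endpoints: "polygon (\<lambda>i. real_of_int (hodge_weight \<mu> n (2 * n + 1 - i))) (real (2 * n))
          = polygon (\<lambda>i. v (\<alpha> (2 * n + 1 - i))) (real (2 * n))"
    and pollack: "\<alpha> n + \<alpha> (n + 1) = 0"
  shows "v (\<Prod>i = n + 1..2 * n. \<alpha> i) = v (\<alpha> n * (\<Prod>i = n + 2..2 * n. \<alpha> i))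
    \<and> real (card (crit_set \<mu> n)) / 2
        \<le> v (\<Prod>i = n + 1..2 * n. \<alpha> i) - (\<Sum>i = n + 1..2 * n. real_of_int (hodge_weight \<mu> n i))
    \<and> (v (\<Prod>i = n + 2..2 * n. \<alpha> i) = (\<Sum>i = n + 2..2 * n. real_of_int (hodge_weight \<mu> n i))
        \<longrightarrow> v (\<Prod>i = n + 1..2 * n. \<alpha> i) - (\<Sum>i = n + 1..2 * n. real_of_int (hodge_weight \<mu> n i))
            = real (card (crit_set \<mu> n)) / 2)"
proof -
  let ?tail = "\<Prod>i = n + 2..2 * n. \<alpha> i"
  have mirror: "2 * n + 1 - n = n + 1" "2 * n + 1 - (n - 1) = n + 2" "n - 1 \<le> 2 * n"
    using n_pos by simp_all
  have nz: "\<alpha> n \<noteq> 0" "\<alpha> (n + 1) \<noteq> 0" "?tail \<noteq> 0" using nonzero n_pos by auto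
  have v_alpha: "v (\<Prod>i = n + 1..2 * n. \<alpha> i) = v (\<alpha> (n + 1)) + v ?tail"
    using n_pos nz by (simp add: prod.atLeast_Suc_atMost valuation_mult[OF val])
  have v_beta: "v (\<alpha> n * ?tail) = v (\<alpha> n) + v ?tail"
    using nz by (simp add: valuation_mult[OF val])
  have hodge_split: "(\<Sum>i = n + 1..2 * n. real_of_int (hodge_weight \<mu> n i))
      = hodge_weight \<mu> n (n + 1) + (\<Sum>i = n + 2..2 * n. real_of_int (hodge_weight \<mu> n i))"
    using n_pos by (simp add: sum.atLeast_Suc_atMost)
  have middle: "v (\<alpha> n) = v lam / 2" "v (\<alpha> (n + 1)) = v lam / 2"
    using valuation_eq_half_of_square_neg[OF val nz(1), of "\<alpha> (n + 1)" lam]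
      valuation_eq_half_of_square_neg[OF val nz(2), of "\<alpha> n" lam]
      pollack pairing[rule_format, of n] n_pos
    by (simp_all add: mirror eq_neg_iff_add_eq_0 add.commute mult.commute)
  have "(\<Sum>i = n + 2..2 * n. real_of_int (hodge_weight \<mu> n i)) \<le> (\<Sum>i = n + 2..2 * n. v (\<alpha> i))"
    using sum_reflected_le_of_polygon_le[OF newton_above_hodge[rule_format] mirror(3)]
    unfolding mirror(2) by simp
  also have "\<dots> = v ?tail"
    using nonzero by (intro valuation_prod[OF val, symmetric]) auto
  finally have tail_bound: "(\<Sum>i = n + 2..2 * n. real_of_int (hodge_weight \<mu> n i)) \<le> v ?tail" .
  have "v (\<alpha> (n + 1)) - hodge_weight \<mu> n (n + 1) = real (card (crit_set \<mu> n)) / 2"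
    unfolding middle(2) val_lam
  proof (rule half_weight_minus_hodge_weight_eq_half_card_crit_set)
    show "\<mu> (n + 1) \<le> \<mu> n" using dominant n_pos by auto
    show "w = \<mu> n + \<mu> (n + 1)" using pure[rule_format, of n] n_pos by (simp add: mirror)
  qed
  then show ?thesis
    using v_alpha v_beta middle hodge_split tail_bound by auto
qed

end
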